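(* Let $m,n$ be positive integers, and let $k,s$ be positive integers with $k<n$ and $s<m+n-k-1$. Then $$\sum_{t=s+1}^{m+n-k-1}(t-n+k+1)(t+2)(t+3)\cdots(t+k)\binom{\frac{mn}{n-k}+n-k-t-2}{\frac{mk}{n-k}-1} =\frac{m}{m+n-k}(s+2)(s+3)\cdots(s+k+1)\binom{\frac{mn}{n-k}+n-k-s-2}{\frac{mk}{n-k}}.$$
   Context: Binomial coefficients are generalized binomial coefficients: for real $a,b$, $\binom{a}{b}=\frac{\Gamma(a+1)}{\Gamma(b+1)\Gamma(a-b+1)}$, where $\Gamma$ is the Gamma function; in particular, if $b$ is a positive integer then $\binom{a}{b}=\frac{a(a-1)\cdots(a-b+1)}{b!}$. The product $(t+2)(t+3)\cdots(t+k)$ is the product of $t+j$ over $j=2,\ldots,k$ (empty product equal to $1$ when $k=1$). *)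

theory Defs
  imports "HOL-Analysis.Analysis"
begin

definition gbinom :: "real \<Rightarrow> real \<Rightarrow> real" where
  "gbinom a b = Gamma (a + 1) / (Gamma (b + 1) * Gamma (a - b + 1))"

end

theory Submission
  imports Defs
begin

(* Put d = n - k and b = m k / d, so that m n / d = b + m and b d = m k. Write F s for the
   right-hand side. Absorption and Pascal's rule for the Gamma-binomial express F s and F (s + 1)
   as multiples of the binomial in the (s + 1)-st summand, and b d = m k turns F s - F (s + 1)
   into exactly that summand. The sum therefore telescopes to F s - F (m + d - 1), and
   F (m + d - 1) = 0 because its binomial has the factor 1 / Gamma 0. *)

lemma gbinom_rGamma: "gbinom x y = Gamma (x + 1) * rGamma (y + 1) * rGamma (x - y + 1)"
  by (simp add: gbinom_def rGamma_inverse_Gamma divide_inverse)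

lemma gbinom_absorption: "y * gbinom x y = (x - y + 1) * gbinom x (y - 1)"
proof -
  have "y * gbinom x y = Gamma (x + 1) * (y * rGamma (y + 1)) * rGamma (x - y + 1)"
    by (simp add: gbinom_rGamma)
  also have "\<dots> = Gamma (x + 1) * rGamma y * ((x - y + 1) * rGamma (x - y + 1 + 1))"
    by (simp only: rGamma_plus1)
  also have "\<dots> = (x - y + 1) * gbinom x (y - 1)"
    by (simp add: gbinom_rGamma algebra_simps)
  finally show ?thesis .
qed

lemma gbinom_pascal:
  assumes "x \<notin> \<int>\<^sub>\<le>\<^sub>0"
  shows "gbinom x y = gbinom (x - 1) y + gbinom (x - 1) (y - 1)"
proof -
  have "gbinom (x - 1) y + gbinom (x - 1) (y - 1)
      = Gamma x * rGamma (y + 1) * rGamma (x - y)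
        + Gamma x * rGamma y * rGamma (x - y + 1)"
    by (simp add: gbinom_rGamma algebra_simps)
  also have "\<dots> = Gamma x * ((x - y) * rGamma (x - y + 1)) * rGamma (y + 1)
        + Gamma x * (y * rGamma (y + 1)) * rGamma (x - y + 1)"
    by (simp only: rGamma_plus1 mult_ac)
  also have "\<dots> = (x * Gamma x) * rGamma (y + 1) * rGamma (x - y + 1)"
    by (simp add: algebra_simps)
  also have "\<dots> = gbinom x y"
    by (simp add: gbinom_rGamma Gamma_plus1[OF assms])
  finally show ?thesis ..
qed

lemma prod_add_shift_first:
  fixes x :: real and k :: nat
  assumes "0 < k"
  shows "(\<Prod>j = 2..k + 1. x + j) = (x + 2) * (\<Prod>j = 2..k. x + 1 + j)"
proof -
  have "(\<Prod>j = 2..k + 1. x + j) = (x + 2) * (\<Prod>j = Suc 2..Suc k. x + j)"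
    using assms by (subst prod.atLeast_Suc_atMost) auto
  then show ?thesis
    unfolding prod.shift_bounds_cl_Suc_ivl by (simp add: add_ac)
qed

lemma gbinom_telescoping_step:
  fixes m d k s :: nat and b :: real
  assumes "0 < b" "0 < k" and bd: "b * d = m * k" and s: "s + 2 \<le> m + d"
  defines "F \<equiv> \<lambda>s::nat.
    m / (m + d) * (\<Prod>j = 2..k + 1. real s + j) * gbinom (b + m + d - s - 2) b"
  shows "(real (Suc s) + 1 - d) * (\<Prod>j = 2..k. real (Suc s) + j)
           * gbinom (b + m + d - Suc s - 2) (b - 1) = F s - F (Suc s)"
proof -
  define r where "r = real m + d - s - 2"
  define G where "G = gbinom (b + r - 1) (b - 1)"
  define Q where "Q = (\<Prod>j = 2..k. real (Suc s) + j)"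
  have Q_left: "(\<Prod>j = 2..k + 1. real s + j) = (s + 2) * Q"
    using prod_add_shift_first[OF \<open>0 < k\<close>, of "real s"] by (simp add: Q_def add_ac)
  have Q_right: "(\<Prod>j = 2..k + 1. real (Suc s) + j) = Q * (s + k + 2)"
    using \<open>0 < k\<close> by (simp add: Q_def add_ac)
  have r: "0 \<le> r"
    using s unfolding r_def by linarith
  have absorb: "b * gbinom (b + r - 1) b = r * G"
    using gbinom_absorption[of b "b + r - 1"] unfolding G_def by simp
  have "gbinom (b + r) b = gbinom (b + r - 1) b + G"
    unfolding G_def using \<open>0 < b\<close> r
    by (intro gbinom_pascal) (auto elim!: nonpos_Ints_cases)
  then have pascal: "b * gbinom (b + r) b = (b + r) * G"
    using absorb by (simp add: algebra_simps)
  have "m * (s + 2) * (b + r) - m * (s + k + 2) * r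
      = (m + d) * (real s + 2 - d) * b + (b * d - m * k) * r"
    unfolding r_def by (simp add: algebra_simps)
  then have key: "m * (s + 2) * (b + r) - m * (s + k + 2) * r = (m + d) * (real s + 2 - d) * b"
    using bd by simp
  define c where "c = m / (m + d)"
  have c: "(m + d) * c = m"
    unfolding c_def using s by simp
  have F_s: "F s = c * ((s + 2) * Q) * gbinom (b + r) b"
    unfolding F_def c_def Q_left r_def by (simp add: algebra_simps)
  have F_Suc: "F (Suc s) = c * (Q * (s + k + 2)) * gbinom (b + r - 1) b"
    unfolding F_def c_def Q_right r_def by (simp add: algebra_simps)
  have "b * (m + d) * (F s - F (Suc s))
      = ((m + d) * c) * Q
          * ((s + 2) * (b * gbinom (b + r) b) - (s + k + 2) * (b * gbinom (b + r - 1) b))"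
    unfolding F_s F_Suc by (simp add: algebra_simps)
  also have "\<dots> = Q * G * (m * (s + 2) * (b + r) - m * (s + k + 2) * r)"
    unfolding c pascal absorb by (simp add: algebra_simps)
  also have "\<dots> = b * (m + d) * ((real (Suc s) + 1 - d) * Q * G)"
    unfolding key by (simp add: algebra_simps)
  finally have "F s - F (Suc s) = (real (Suc s) + 1 - d) * Q * G"
    using \<open>0 < b\<close> s by simp
  moreover have "b + m + d - Suc s - 2 = b + r - 1"
    unfolding r_def by simp
  ultimately show ?thesis
    unfolding Q_def G_def by simp
qed

lemma gbinom_telescoping_sum:
  fixes m d k s :: nat and b :: real
  assumes "0 < b" "0 < k" "b * d = m * k" "s < m + d"
  shows "(\<Sum>t = s + 1..m + d - 1.
            (real t + 1 - d) * (\<Prod>j = 2..k. real t + j) * gbinom (b + m + d - t - 2) (b - 1))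
       = m / (m + d) * (\<Prod>j = 2..k + 1. real s + j) * gbinom (b + m + d - s - 2) b"
proof -
  define F where "F \<equiv> \<lambda>s::nat.
    m / (m + d) * (\<Prod>j = 2..k + 1. real s + j) * gbinom (b + m + d - s - 2) b"
  have "(\<Sum>t = s + 1..m + d - 1.
            (real t + 1 - d) * (\<Prod>j = 2..k. real t + j) * gbinom (b + m + d - t - 2) (b - 1))
      = (\<Sum>t = Suc s..m + d - 1. (- F t) - (- F (t - 1)))"
  proof (intro sum.cong)
    fix t assume "t \<in> {Suc s..m + d - 1}"
    then have "t - 1 + 2 \<le> m + d" "Suc (t - 1) = t"
      by auto
    then show "(real t + 1 - d) * (\<Prod>j = 2..k. real t + j) * gbinom (b + m + d - t - 2) (b - 1)
        = (- F t) - (- F (t - 1))"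
      using gbinom_telescoping_step[OF assms(1-3), of "t - 1"] unfolding F_def by simp
  qed simp
  also have "\<dots> = F s - F (m + d - 1)"
    using assms(4) by (subst sum_telescope'') auto
  also have "F (m + d - 1) = 0"
    using assms(4) by (simp add: F_def gbinom_def of_nat_diff)
  finally show ?thesis
    unfolding F_def by simp
qed

theorem lemma2p4:
  fixes m n k s :: nat
  assumes "0 < m" "0 < n" "0 < k" "0 < s" "k < n" "s < m + n - k - 1"
  shows "(\<Sum>t = s + 1..m + n - k - 1.
            (real t - real n + real k + 1) * (\<Prod>j = 2..k. real t + real j) *
            gbinom (real m * real n / (real n - real k) + real n - real k - real t - 2)
                   (real m * real k / (real n - real k) - 1))
         = real m / (real m + real n - real k) * (\<Prod>j = 2..k + 1. real s + real j) *
            gbinom (real m * real n / (real n - real k) + real n - real k - real s - 2)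
                   (real m * real k / (real n - real k))"
proof -
  define d where "d = n - k"
  define b where "b = real m * real k / d"
  have d: "real d = real n - real k" "m + n - k - 1 = m + d - 1"
    using assms unfolding d_def by auto
  have b: "real m * real k / (real n - real k) = b"
    unfolding b_def d(1) ..
  have a: "real m * real n / (real n - real k) = b + m"
    using assms unfolding b[symmetric] by (simp add: field_simps)
  have "0 < b" "b * d = m * k" "s < m + d"
    using assms unfolding b_def d_def by auto
  then show ?thesis
    using gbinom_telescoping_sum[of b k d m s] assms(3)
    unfolding a b d(2) by (simp add: d(1) algebra_simps)
qed

end
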